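(* For every ordinal $\beta$ with $1\leq\beta\leq\omega_1$, state bisimilarity $\sim_s$ on $\mathbb{S}(\beta)$ is the identity relation on $I\times\beta$.
   Context: An LMP is $(S,\Sigma,\{\tau_a\}_{a\in L})$ with $L$ countable and Markov kernels $\tau_a$ (subprobability measures in the second argument, measurable in the first). For a relation $R$, $\Sigma(R)$ = $R$-closed members of $\Sigma$ ($A$ is $R$-closed if $x\in A$, $xRs\Rightarrow s\in A$). A state bisimulation is a symmetric relation $R$ such that $sRt$ and $C\in\Sigma(R)$ imply $\tau_a(s,C)=\tau_a(t,C)$ for all $a$; $\sim_s$ is the union of all state bisimulations. The processes $\mathbb{S}(\beta)$: $I=(0,1)$, $\mathfrak{m}$ Lebesgue measure, $V\subseteq I$ Lebesgue nonmeasurable, $\mathcal{B}_V=\sigma(\mathcal{B}(I)\cup\{V\})$, and $\mathfrak{m}_0,\mathfrak{m}_1$ measures on $\mathcal{B}_V$ extending $\mathfrak{m}$ with $\mathfrak{m}_0(V)\neq\mathfrak{m}_1(V)$. Let $\{q_n\}_{n\in\omega}$ enumerate $\mathbb{Q}\cap I$. For ordinals $\eta$: $\alpha_n(0)=0$, $\alpha_n(\zeta+1)=\zeta$ for all $n$, and for limit $\lambda$, $(\alpha_n(\lambda))_{n\in\omega}$ is a fixed strictly increasing sequence of nonzero ordinals below $\lambda$ cofinal in $\lambda$. For an ordinal $\beta\leq\omega_1$, $\mathbb{S}(\beta)=(I\times\beta,\ \mathcal{B}_V\otimes\mathcal{P}(\beta),\ \{\tau_n\}_{n\in\omega})$ with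 $\tau_n((x,\eta),A)=x\cdot\mathfrak{m}_0(A_0)$ if $\eta=0$; $=\mathfrak{m}_0(A_{\alpha_n(\eta)})$ if $\eta>0$ and $x<q_n$; $=\mathfrak{m}_1(A_{\alpha_n(\eta)})$ if $\eta>0$ and $x\geq q_n$; here $A_\gamma=\{r:(r,\gamma)\in A\}$. These $\tau_n$ are Markov kernels, so $\mathbb{S}(\beta)$ is an LMP. *)

theory Defs
  imports "HOL-Analysis.Analysis"
begin

text \<open>An LMP is given by a state set S, a sigma-algebra Sigma on S, and kernels
  tau a s C (the subprobability of reaching C from s under label a).\<close>

definition R_closed :: "('s \<times> 's) set \<Rightarrow> 's set \<Rightarrow> bool" where
  "R_closed R A \<longleftrightarrow> (\<forall>x s. x \<in> A \<longrightarrow> (x, s) \<in> R \<longrightarrow> s \<in> A)"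

definition state_bisimulation ::
  "'s set \<Rightarrow> 's set set \<Rightarrow> ('l \<Rightarrow> 's \<Rightarrow> 's set \<Rightarrow> real) \<Rightarrow> ('s \<times> 's) set \<Rightarrow> bool" where
  "state_bisimulation S \<Sigma> \<tau> R \<longleftrightarrow> R \<subseteq> S \<times> S \<and> sym R \<and>
     (\<forall>s t C a. (s, t) \<in> R \<longrightarrow> C \<in> \<Sigma> \<longrightarrow> R_closed R C \<longrightarrow> \<tau> a s C = \<tau> a t C)"

definition state_bisimilarity ::
  "'s set \<Rightarrow> 's set set \<Rightarrow> ('l \<Rightarrow> 's \<Rightarrow> 's set \<Rightarrow> real) \<Rightarrow> ('s \<times> 's) set" where
  "state_bisimilarity S \<Sigma> \<tau> = \<Union>{R. state_bisimulation S \<Sigma> \<tau> R}"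

definition ozero :: "'o::wellorder" where
  "ozero = (LEAST x. True)"

definition is_succ_of :: "'o::wellorder \<Rightarrow> 'o \<Rightarrow> bool" where
  "is_succ_of \<eta> \<zeta> \<longleftrightarrow> \<zeta> < \<eta> \<and> (\<forall>\<xi>. \<not> (\<zeta> < \<xi> \<and> \<xi> < \<eta>))"

definition is_limit :: "'o::wellorder \<Rightarrow> bool" where
  "is_limit \<eta> \<longleftrightarrow> \<eta> \<noteq> ozero \<and> \<not> (\<exists>\<zeta>. is_succ_of \<eta> \<zeta>)"

text \<open>B represents an ordinal beta with 1 \<le> beta \<le> omega_1: a nonempty initial
  segment of a well-ordered type all of whose proper initial segments are countable.\<close>
definition ordinal_1_to_omega1 :: "'o::wellorder set \<Rightarrow> bool" where
  "ordinal_1_to_omega1 B \<longleftrightarrow> B \<noteq> {} \<and> (\<forall>\<eta>\<in>B. \<forall>\<zeta>. \<zeta> < \<eta> \<longrightarrow> \<zeta> \<in> B) \<and>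
     (\<forall>\<eta>\<in>B. countable {\<zeta>. \<zeta> < \<eta>})"

definition alpha_system :: "'o::wellorder set \<Rightarrow> (nat \<Rightarrow> 'o \<Rightarrow> 'o) \<Rightarrow> bool" where
  "alpha_system B \<alpha> \<longleftrightarrow>
     (\<forall>n. \<alpha> n ozero = ozero) \<and>
     (\<forall>\<eta>\<in>B. \<forall>\<zeta> n. is_succ_of \<eta> \<zeta> \<longrightarrow> \<alpha> n \<eta> = \<zeta>) \<and>
     (\<forall>l\<in>B. is_limit l \<longrightarrow>
        strict_mono (\<lambda>n. \<alpha> n l) \<and> (\<forall>n. \<alpha> n l \<noteq> ozero \<and> \<alpha> n l < l) \<and>
        (\<forall>\<zeta>. \<zeta> < l \<longrightarrow> (\<exists>n. \<zeta> \<le> \<alpha> n l)))"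

definition I_set :: "real set" where
  "I_set = {0<..<1}"

definition BV_space :: "real set \<Rightarrow> real measure" where
  "BV_space V = sigma I_set (sets (restrict_space borel I_set) \<union> {V})"

definition sect :: "(real \<times> 'o) set \<Rightarrow> 'o \<Rightarrow> real set" where
  "sect A \<gamma> = {r. (r, \<gamma>) \<in> A}"

definition tauS ::
  "real measure \<Rightarrow> real measure \<Rightarrow> (nat \<Rightarrow> real) \<Rightarrow> (nat \<Rightarrow> 'o::wellorder \<Rightarrow> 'o)
     \<Rightarrow> nat \<Rightarrow> real \<times> 'o \<Rightarrow> (real \<times> 'o) set \<Rightarrow> real" where
  "tauS m0 m1 q \<alpha> n s A =
     (let x = fst s; \<eta> = snd s in
      if \<eta> = ozero then x * measure m0 (sect A ozero)
      else if x < q n then measure m0 (sect A (\<alpha> n \<eta>))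
      else measure m1 (sect A (\<alpha> n \<eta>)))"

end

theory Submission
  imports Defs "HOL-Probability.Probability_Measure"
begin

text \<open>Let R be a state bisimulation. By well-founded induction on the level \<delta>,
  R relates (x, \<delta>) only to itself. At level 0 the kernel \<tau> 0 sends (x, 0) to the
  whole space with probability x, whereas every state of positive level does so with
  probability 1. At a positive level \<delta> all lower levels are fixed pointwise by R, so
  each set X \<times> {\<gamma>} with \<gamma> < \<delta> is R-closed. Testing with I \<times> {\<alpha> n \<delta>} shows that related
  states (x, \<delta>) and (y, \<zeta>) satisfy \<alpha> n \<zeta> = \<alpha> n \<delta> for all n, which forces \<zeta> = \<delta>;
  testing with V \<times> {\<alpha> n \<delta>}, where m0 and m1 differ, shows that x and y lie on the same
  side of every rational q n, hence x = y.\<close>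

lemma state_bisimulation_Id_on: "state_bisimulation S \<Sigma> \<tau> (Id_on S)"
  unfolding state_bisimulation_def by (auto simp: sym_def)

lemma state_bisimilarity_eq_Id_on:
  assumes "\<And>R. state_bisimulation S \<Sigma> \<tau> R \<Longrightarrow> R \<subseteq> Id_on S"
  shows "state_bisimilarity S \<Sigma> \<tau> = Id_on S"
  unfolding state_bisimilarity_def using assms state_bisimulation_Id_on by blast

lemma R_closed_Times_singleton:
  assumes "\<And>x t. ((x, \<gamma>), t) \<in> R \<Longrightarrow> t = (x, \<gamma>)"
  shows "R_closed R (X \<times> {\<gamma>})"
  using assms unfolding R_closed_def by auto

lemma ozero_le: "ozero \<le> (x::'o::wellorder)"
  unfolding ozero_def by (rule Least_le) simp

lemma is_succ_of_unique:
  fixes a b c :: "'o::wellorder"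
  assumes "is_succ_of a c" "is_succ_of b c"
  shows "a = b"
  using assms unfolding is_succ_of_def by (metis linorder_neqE)

lemma alpha_system_less:
  assumes "alpha_system B \<alpha>" "\<eta> \<in> B" "\<eta> \<noteq> ozero"
  shows "\<alpha> n \<eta> < \<eta>"
proof (cases "is_limit \<eta>")
  case True
  then show ?thesis using assms unfolding alpha_system_def by blast
next
  case False
  then obtain \<zeta> where "is_succ_of \<eta> \<zeta>" using assms(3) unfolding is_limit_def by blast
  moreover from this have "\<alpha> n \<eta> = \<zeta>" using assms unfolding alpha_system_def by blast
  ultimately show ?thesis unfolding is_succ_of_def by simp
qed

lemma alpha_system_inj_succ:
  assumes \<alpha>: "alpha_system B \<alpha>" and "\<zeta> \<in> B" "\<delta> \<in> B" "\<zeta> \<noteq> ozero"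
    and eq: "\<And>n. \<alpha> n \<zeta> = \<alpha> n \<delta>" and succ: "is_succ_of \<delta> d"
  shows "\<zeta> = \<delta>"
proof -
  have \<alpha>_\<delta>: "\<alpha> n \<delta> = d" for n using \<alpha> assms(3) succ unfolding alpha_system_def by blast
  show ?thesis
  proof (cases "is_limit \<zeta>")
    case True
    then have "strict_mono (\<lambda>n. \<alpha> n \<zeta>)" using \<alpha> assms(2) unfolding alpha_system_def by blast
    then have "\<alpha> 0 \<zeta> < \<alpha> 1 \<zeta>" by (simp add: strict_mono_def)
    then show ?thesis using eq \<alpha>_\<delta> by simp
  next
    case False
    then obtain z where z: "is_succ_of \<zeta> z" using assms(4) unfolding is_limit_def by blast
    then have "\<alpha> 0 \<zeta> = z" using \<alpha> assms(2) unfolding alpha_system_def by blast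
    then have "z = d" using eq \<alpha>_\<delta> by metis
    then show ?thesis using is_succ_of_unique z succ by metis
  qed
qed

lemma alpha_system_inj_limit:
  assumes \<alpha>: "alpha_system B \<alpha>" and "\<zeta> \<in> B" "\<delta> \<in> B" "is_limit \<zeta>" "is_limit \<delta>"
    and eq: "\<And>n. \<alpha> n \<zeta> = \<alpha> n \<delta>"
  shows "\<zeta> = \<delta>"
proof -
  have less_cofinal: "\<alpha> n \<eta> < \<eta>" "\<xi> < \<eta> \<Longrightarrow> \<exists>k. \<xi> \<le> \<alpha> k \<eta>"
    if "\<eta> \<in> B" "is_limit \<eta>" for \<eta> \<xi> n
    using \<alpha> that unfolding alpha_system_def by blast+
  have "\<not> \<zeta> < \<delta>" and "\<not> \<delta> < \<zeta>"
    using less_cofinal[OF assms(2,4)] less_cofinal[OF assms(3,5)] eq by (metis leD)+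
  then show ?thesis by simp
qed

lemma alpha_system_inj:
  assumes "alpha_system B \<alpha>" "\<zeta> \<in> B" "\<delta> \<in> B" "\<zeta> \<noteq> ozero" "\<delta> \<noteq> ozero"
    and "\<And>n. \<alpha> n \<zeta> = \<alpha> n \<delta>"
  shows "\<zeta> = \<delta>"
proof (cases "\<exists>d. is_succ_of \<delta> d")
  case True
  then show ?thesis using alpha_system_inj_succ[OF assms(1-4,6)] by blast
next
  case not_succ_\<delta>: False
  show ?thesis
  proof (cases "\<exists>d. is_succ_of \<zeta> d")
    case True
    then show ?thesis using alpha_system_inj_succ[OF assms(1,3,2,5)] assms(6) by metis
  next
    case False
    then show ?thesis
      using alpha_system_inj_limit[OF assms(1-3) _ _ assms(6)] not_succ_\<delta> assms(4,5)
      unfolding is_limit_def by blast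
  qed
qed

lemma eq_if_same_side_of_rationals:
  fixes x y :: real
  assumes "x \<in> I_set" "y \<in> I_set" "\<rat> \<inter> I_set \<subseteq> range q"
    and same_side: "\<And>n. x < q n \<longleftrightarrow> y < q n"
  shows "x = y"
proof -
  have "\<not> a < b" if "a \<in> I_set" "b \<in> I_set" "\<And>n. a < q n \<longleftrightarrow> b < q n" for a b :: real
  proof
    assume "a < b"
    then obtain r where r: "r \<in> \<rat>" "a < r" "r < b" using Rats_dense_in_real by blast
    with that(1,2) have "r \<in> range q" using assms(3) unfolding I_set_def by auto
    then show False using that(3) r by auto
  qed
  then show ?thesis using assms by (meson linorder_neqE)
qed

lemma space_BV_space: "space (BV_space V) = I_set"
  unfolding BV_space_def by (rule space_measure_of_conv)

lemma sets_BV_space: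
  assumes "V \<subseteq> I_set"
  shows "sets (BV_space V) = sigma_sets I_set (sets (restrict_space borel I_set) \<union> {V})"
  unfolding BV_space_def using assms sets.space_closed[of "restrict_space borel I_set"]
  by (intro sets_measure_of) (auto simp: space_restrict_space)

locale S_beta =
  fixes V :: "real set" and m0 m1 :: "real measure" and q :: "nat \<Rightarrow> real"
    and B :: "'o::wellorder set" and \<alpha> :: "nat \<Rightarrow> 'o \<Rightarrow> 'o"
  assumes V_subset: "V \<subseteq> I_set"
    and sets_m0: "sets m0 = sets (BV_space V)" and sets_m1: "sets m1 = sets (BV_space V)"
    and prob_m0: "prob_space m0" and prob_m1: "prob_space m1"
    and measure_V_neq: "measure m0 V \<noteq> measure m1 V"
    and rationals_in_range: "\<rat> \<inter> I_set \<subseteq> range q"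
    and B_nonempty: "B \<noteq> {}" and B_down_closed: "\<And>\<eta> \<zeta>. \<eta> \<in> B \<Longrightarrow> \<zeta> < \<eta> \<Longrightarrow> \<zeta> \<in> B"
    and alpha: "alpha_system B \<alpha>"
begin

abbreviation "states \<equiv> I_set \<times> B"
abbreviation "events \<equiv> sets (BV_space V \<Otimes>\<^sub>M count_space B)"
abbreviation "\<tau> \<equiv> tauS m0 m1 q \<alpha>"

lemma ozero_in_B: "ozero \<in> B"
  using B_nonempty B_down_closed ozero_le by (metis ex_in_conv order.not_eq_order_implies_strict)

lemma alpha_in_B: "\<eta> \<in> B \<Longrightarrow> \<eta> \<noteq> ozero \<Longrightarrow> \<alpha> n \<eta> \<in> B"
  using alpha_system_less[OF alpha] B_down_closed by blast

lemma Times_singleton_in_events: "X \<in> sets (BV_space V) \<Longrightarrow> \<gamma> \<in> B \<Longrightarrow> X \<times> {\<gamma>} \<in> events"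
  by (rule pair_measureI) auto

lemma states_in_events: "states \<in> events"
  using sets.top[of "BV_space V \<Otimes>\<^sub>M count_space B"] by (simp add: space_pair_measure space_BV_space)

lemma V_in_sets: "V \<in> sets (BV_space V)"
  unfolding sets_BV_space[OF V_subset] by (auto intro: sigma_sets.Basic)

lemma I_set_in_sets: "I_set \<in> sets (BV_space V)"
  using sets.top[of "BV_space V"] by (simp add: space_BV_space)

lemma measure_m0_I_set: "measure m0 I_set = 1" and measure_m1_I_set: "measure m1 I_set = 1"
  using prob_space.prob_space[OF prob_m0] prob_space.prob_space[OF prob_m1]
    sets_eq_imp_space_eq[OF sets_m0] sets_eq_imp_space_eq[OF sets_m1]
  by (simp_all add: space_BV_space)

lemma tau_ozero_states: "\<tau> n (x, ozero) states = x"
  using ozero_in_B measure_m0_I_set by (simp add: tauS_def sect_def)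

lemma tau_states: "\<zeta> \<in> B \<Longrightarrow> \<zeta> \<noteq> ozero \<Longrightarrow> \<tau> n (y, \<zeta>) states = 1"
  using alpha_in_B measure_m0_I_set measure_m1_I_set by (simp add: tauS_def sect_def)

lemma tau_Times_singleton:
  "\<delta> \<noteq> ozero \<Longrightarrow> \<tau> n (x, \<delta>) (X \<times> {\<gamma>}) =
     (if \<alpha> n \<delta> = \<gamma> then if x < q n then measure m0 X else measure m1 X else 0)"
  by (simp add: tauS_def sect_def)

context
  fixes R assumes bisim: "state_bisimulation states events \<tau> R"
begin

lemma bisim_subset: "R \<subseteq> states \<times> states"
  and bisim_sym: "sym R"
  and bisim_eq: "(s, t) \<in> R \<Longrightarrow> C \<in> events \<Longrightarrow> R_closed R C \<Longrightarrow> \<tau> n s C = \<tau> n t C"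
  using bisim unfolding state_bisimulation_def by blast+

lemma bisim_fixes_ozero:
  assumes r: "((x, ozero), (y, \<zeta>)) \<in> R"
  shows "(y, \<zeta>) = (x, ozero)"
proof -
  have "x \<in> I_set" "\<zeta> \<in> B" using r bisim_subset by auto
  have "R_closed R states" using bisim_subset unfolding R_closed_def by blast
  then have "x = \<tau> 0 (y, \<zeta>) states"
    using bisim_eq[OF r states_in_events] tau_ozero_states by simp
  moreover have "\<tau> 0 (y, \<zeta>) states = 1" if "\<zeta> \<noteq> ozero" using tau_states \<open>\<zeta> \<in> B\<close> that .
  ultimately show ?thesis using tau_ozero_states \<open>x \<in> I_set\<close> by (cases "\<zeta> = ozero") (auto simp: I_set_def)
qed

context
  fixes \<delta> assumes \<delta>: "\<delta> \<in> B" "\<delta> \<noteq> ozero"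
    and below_fixed: "\<And>\<gamma> x t. \<gamma> < \<delta> \<Longrightarrow> ((x, \<gamma>), t) \<in> R \<Longrightarrow> t = (x, \<gamma>)"
begin

lemma bisim_eq_below:
  assumes "((x, \<delta>), t) \<in> R" "X \<in> sets (BV_space V)"
  shows "\<tau> n (x, \<delta>) (X \<times> {\<alpha> n \<delta>}) = \<tau> n t (X \<times> {\<alpha> n \<delta>})"
  using alpha_system_less[OF alpha \<delta>] alpha_in_B[OF \<delta>]
  by (intro bisim_eq assms Times_singleton_in_events R_closed_Times_singleton below_fixed)

lemma bisim_same_level:
  assumes r: "((x, \<delta>), (y, \<zeta>)) \<in> R"
  shows "\<zeta> = \<delta>"
proof -
  have "\<zeta> \<in> B" using r bisim_subset by auto
  have "\<zeta> \<noteq> ozero"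
  proof
    assume "\<zeta> = ozero"
    then have "((y, ozero), (x, \<delta>)) \<in> R" using r bisim_sym by (simp add: sym_def)
    then show False using bisim_fixes_ozero \<delta>(2) by blast
  qed
  have "\<alpha> n \<zeta> = \<alpha> n \<delta>" for n
    using bisim_eq_below[OF r I_set_in_sets, of n] \<delta>(2) \<open>\<zeta> \<noteq> ozero\<close>
      measure_m0_I_set measure_m1_I_set
    by (auto simp: tau_Times_singleton split: if_splits)
  then show ?thesis using alpha_system_inj[OF alpha \<open>\<zeta> \<in> B\<close> \<delta>(1) \<open>\<zeta> \<noteq> ozero\<close> \<delta>(2)] by blast
qed

lemma bisim_fixes_level:
  assumes r: "((x, \<delta>), (y, \<zeta>)) \<in> R"
  shows "(y, \<zeta>) = (x, \<delta>)"
proof -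
  have "\<zeta> = \<delta>" using bisim_same_level[OF r] .
  have "x < q n \<longleftrightarrow> y < q n" for n
    using bisim_eq_below[OF r V_in_sets, of n] \<open>\<zeta> = \<delta>\<close> \<delta>(2) measure_V_neq
    by (auto simp: tau_Times_singleton split: if_splits)
  moreover have "x \<in> I_set" "y \<in> I_set" using r bisim_subset by auto
  ultimately show ?thesis
    using eq_if_same_side_of_rationals rationals_in_range \<open>\<zeta> = \<delta>\<close> by blast
qed

end

lemma bisim_fixes: "((x, \<delta>), t) \<in> R \<Longrightarrow> t = (x, \<delta>)"
proof (induction \<delta> arbitrary: x t rule: less_induct)
  case (less \<delta>)
  obtain y \<zeta> where t: "t = (y, \<zeta>)" by (cases t)
  have "\<delta> \<in> B" using less.prems bisim_subset by auto
  show ?case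
  proof (cases "\<delta> = ozero")
    case True
    then show ?thesis using bisim_fixes_ozero less.prems t by simp
  next
    case False
    then show ?thesis using bisim_fixes_level[OF \<open>\<delta> \<in> B\<close> False less.IH] less.prems t by blast
  qed
qed

lemma bisim_subset_Id_on: "R \<subseteq> Id_on states"
  using bisim_fixes bisim_subset by (fastforce simp: Id_on_iff)

end

end

theorem lemma5p3:
  fixes V :: "real set" and m0 m1 :: "real measure" and q :: "nat \<Rightarrow> real"
    and B :: "'o::wellorder set" and \<alpha> :: "nat \<Rightarrow> 'o \<Rightarrow> 'o"
  assumes "V \<subseteq> I_set" and "V \<notin> sets lebesgue"
    and "sets m0 = sets (BV_space V)" and "sets m1 = sets (BV_space V)"
    and "\<forall>A \<in> sets (restrict_space borel I_set). emeasure m0 A = emeasure lborel A"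
    and "\<forall>A \<in> sets (restrict_space borel I_set). emeasure m1 A = emeasure lborel A"
    and "emeasure m0 V \<noteq> emeasure m1 V"
    and "bij_betw q UNIV (\<rat> \<inter> I_set)"
    and "ordinal_1_to_omega1 B"
    and "alpha_system B \<alpha>"
  shows "state_bisimilarity (I_set \<times> B) (sets (BV_space V \<Otimes>\<^sub>M count_space B)) (tauS m0 m1 q \<alpha>)
           = Id_on (I_set \<times> B)"
proof -
  have "I_set \<in> sets (restrict_space borel I_set)"
    using sets.top[of "restrict_space borel I_set"] by (simp add: space_restrict_space)
  moreover have "emeasure lborel I_set = 1" by (simp add: I_set_def)
  ultimately have prob: "prob_space m0" "prob_space m1"
    using assms(3-6) sets_eq_imp_space_eq space_BV_space by (metis prob_spaceI)+
  then have "measure m0 V \<noteq> measure m1 V"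
    using assms(7) by (metis prob_space_def finite_measure.emeasure_eq_measure)
  with prob interpret S_beta V m0 m1 q B \<alpha>
    using assms(1,3,4,8-10) unfolding bij_betw_def ordinal_1_to_omega1_def
    by (intro S_beta.intro) auto
  show ?thesis by (rule state_bisimilarity_eq_Id_on) (rule bisim_subset_Id_on)
qed

end
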